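(* Let $U\subseteq\mathbb R^{d}$ and $V\subseteq\mathbb R$ be open. Let $f_1,\dots,f_n:U\to V$ be real-analytic functions each of $(\tau_1,\tau_2)$-type, and let $g:V^n\to\mathbb R$ be real-analytic of $(\sigma_1,\sigma_2)$-type. Writing $f=(f_1,\dots,f_n)$, the composition $h=g\circ f$ is real-analytic of $\big(\min(\tau_1,(\sigma_1\circ f)\cdot\tau_1/\tau_2),\ \sigma_2\circ f\big)$-type.
   Context: Let $U\subseteq\mathbb R^d$ be open and $\tau_1,\tau_2:U\to\mathbb R_{>0}$. A real-analytic $f:U\to\mathbb R$ has $(\tau_1,\tau_2)$-type if for every $\zeta_0\in U$, writing the power series of $f$ at $\zeta_0$ as $\sum_\mu a_{\zeta_0,\mu}(\zeta-\zeta_0)^\mu$ (over multi-indices $\mu$), for every $\zeta$ with $\|\zeta-\zeta_0\|_\infty\le\tau_1(\zeta_0)$ the series converges absolutely and $\sum_{\mu:|\mu|\ge1}|a_{\zeta_0,\mu}|\,|\zeta-\zeta_0|^\mu\le\tau_2(\zeta_0)$, where $|\zeta-\zeta_0|^\mu=\prod_i|\zeta_i-\zeta_{0,i}|^{\mu_i}$. *)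

theory Defs
  imports "HOL-Analysis.Analysis"
begin

text \<open>Points of R^d are vectors real^'d; multi-indices are functions 'd => nat.
  The sup-norm is the library's infnorm (max of absolute values of components).\<close>

definition mono_abs :: "('d::finite \<Rightarrow> nat) \<Rightarrow> real^'d \<Rightarrow> real" where
  "mono_abs \<mu> x = (\<Prod>i\<in>UNIV. \<bar>x $ i\<bar> ^ (\<mu> i))"

definition monom_val :: "('d::finite \<Rightarrow> nat) \<Rightarrow> real^'d \<Rightarrow> real" where
  "monom_val \<mu> x = (\<Prod>i\<in>UNIV. (x $ i) ^ (\<mu> i))"

definition mi_order :: "('d::finite \<Rightarrow> nat) \<Rightarrow> nat" where
  "mi_order \<mu> = (\<Sum>i\<in>UNIV. \<mu> i)"

text \<open>a is a (local) power series of f at z0: the series sum_mu a_mu (z-z0)^mu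
  converges (unconditionally, equivalently absolutely) to f z on a neighbourhood of z0.\<close>
definition power_series_at ::
  "(real^'d::finite \<Rightarrow> real) \<Rightarrow> real^'d \<Rightarrow> (('d \<Rightarrow> nat) \<Rightarrow> real) \<Rightarrow> bool" where
  "power_series_at f z0 a \<longleftrightarrow>
     (\<exists>r>0. \<forall>z. infnorm (z - z0) < r \<longrightarrow> ((\<lambda>\<mu>. a \<mu> * monom_val \<mu> (z - z0)) has_sum f z) UNIV)"

definition real_analytic_on :: "(real^'d::finite) set \<Rightarrow> (real^'d \<Rightarrow> real) \<Rightarrow> bool" where
  "real_analytic_on U f \<longleftrightarrow> (\<forall>z0\<in>U. \<exists>a. power_series_at f z0 a)"

definition of_type ::
  "(real^'d::finite) set \<Rightarrow> (real^'d \<Rightarrow> real) \<Rightarrow> (real^'d \<Rightarrow> real) \<Rightarrow> (real^'d \<Rightarrow> real) \<Rightarrow> bool" where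
  "of_type U f t1 t2 \<longleftrightarrow>
     (\<forall>z\<in>U. t1 z > 0 \<and> t2 z > 0) \<and> real_analytic_on U f \<and>
     (\<forall>z0\<in>U. \<forall>a. power_series_at f z0 a \<longrightarrow>
        (\<forall>z. infnorm (z - z0) \<le> t1 z0 \<longrightarrow>
           (\<lambda>\<mu>. \<bar>a \<mu> * monom_val \<mu> (z - z0)\<bar>) summable_on UNIV \<and>
           (\<Sum>\<^sub>\<infinity>\<mu>\<in>{\<mu>. mi_order \<mu> \<ge> 1}. \<bar>a \<mu>\<bar> * mono_abs \<mu> (z - z0)) \<le> t2 z0))"

end

theory Submission
  imports Defs "HOL-Complex_Analysis.Cauchy_Integral_Formula"
begin

text \<open>
  Fix \<open>z\<^sub>0\<close>, let \<open>A\<^sub>i\<close> be the coefficients of \<open>f\<^sub>i\<close> and \<open>B\<close> those of \<open>g\<close>, and write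
  \<open>f\<^sub>i(z\<^sub>0 + y) - f\<^sub>i(z\<^sub>0) = \<Sum>\<^sub>\<mu>\<^sub>\<noteq>\<^sub>0 A\<^sub>i\<^sub>\<mu> y\<^sup>\<mu>\<close>. Substituting these series into the series of \<open>g\<close> at
  \<open>f(z\<^sub>0)\<close> and multiplying out gives a family of terms indexed by choices of one
  nonconstant multi-index per factor. Replacing every term by its absolute value turns the
  inner sums into the majorants \<open>S\<^sub>i(y) = \<Sum>\<^sub>\<mu>\<^sub>\<noteq>\<^sub>0 |A\<^sub>i\<^sub>\<mu>| |y|\<^sup>\<mu>\<close>; since every such term has order
  at least one, \<open>S\<^sub>i(y) \<le> \<tau>\<^sub>2 \<parallel>y\<parallel>/\<tau>\<^sub>1\<close>, which is at most \<open>\<sigma>\<^sub>1(f(z\<^sub>0))\<close> on the stated radius. So the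
  whole family is absolutely summable, and its nonconstant part is bounded by the tail of
  \<open>g\<close>'s majorant at \<open>S(y)\<close>, i.e. by \<open>\<sigma>\<^sub>2(f(z\<^sub>0))\<close>. Grouping the terms by degree in \<open>y\<close> yields
  a power series of \<open>g \<circ> f\<close> at \<open>z\<^sub>0\<close> with these bounds, and power series are unique.
\<close>

section \<open>Grouping and multiplying unconditional sums\<close>

lemma bij_betw_fibres:
  assumes "\<And>j. j \<in> J \<Longrightarrow> p j \<in> K"
  shows "bij_betw (\<lambda>j. (p j, j)) J (Sigma K (\<lambda>k. {j\<in>J. p j = k}))"
  using assms by (auto simp: bij_betw_def inj_on_def image_def)

lemma has_sum_group_fibres:
  fixes T :: "'j \<Rightarrow> real"
  assumes "(T has_sum s) J" "\<And>j. j \<in> J \<Longrightarrow> p j \<in> K"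
    and "\<And>k. k \<in> K \<Longrightarrow> (T has_sum t k) {j\<in>J. p j = k}"
  shows "(t has_sum s) K"
proof -
  have "((\<lambda>x. T (snd x)) has_sum s) (Sigma K (\<lambda>k. {j\<in>J. p j = k}))"
    using has_sum_reindex_bij_betw[OF bij_betw_fibres[OF assms(2)], where f="\<lambda>x. T (snd x)"] assms(1)
    by simp
  then show ?thesis
    by (rule has_sum_Sigma') (use assms(3) in simp)
qed

lemma has_sum_ungroup_fibres:
  fixes T :: "'j \<Rightarrow> real"
  assumes "T summable_on J" "\<And>j. j \<in> J \<Longrightarrow> p j \<in> K"
    and "\<And>k. k \<in> K \<Longrightarrow> (T has_sum t k) {j\<in>J. p j = k}" "(t has_sum s) K"
  shows "(T has_sum s) J"
proof -
  note bij = bij_betw_fibres[OF assms(2)]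
  have "(\<lambda>x. T (snd x)) summable_on (Sigma K (\<lambda>k. {j\<in>J. p j = k}))"
    using summable_on_reindex_bij_betw[OF bij, where f="\<lambda>x. T (snd x)"] assms(1) by simp
  then have "((\<lambda>x. T (snd x)) has_sum s) (Sigma K (\<lambda>k. {j\<in>J. p j = k}))"
    by (intro has_sum_SigmaI[OF _ assms(4)]) (use assms(3) in simp)
  then show ?thesis
    using has_sum_reindex_bij_betw[OF bij, where f="\<lambda>x. T (snd x)"] by simp
qed

lemma summable_on_ungroup_fibres_nonneg:
  fixes T :: "'j \<Rightarrow> real"
  assumes "\<And>j. j \<in> J \<Longrightarrow> T j \<ge> 0" "\<And>j. j \<in> J \<Longrightarrow> p j \<in> K"
    and "\<And>k. k \<in> K \<Longrightarrow> (T has_sum t k) {j\<in>J. p j = k}" "t summable_on K"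
  shows "T summable_on J"
proof -
  note bij = bij_betw_fibres[OF assms(2)]
  have "(\<lambda>x. T (snd x)) summable_on (Sigma K (\<lambda>k. {j\<in>J. p j = k}))"
    by (rule summable_on_SigmaI[OF _ assms(4)]) (use assms(1,3) in auto)
  then show ?thesis
    using summable_on_reindex_bij_betw[OF bij, where f="\<lambda>x. T (snd x)"] by simp
qed

lemma has_sum_product_abs:
  fixes \<phi> :: "'x \<Rightarrow> real" and \<psi> :: "'y \<Rightarrow> real"
  assumes "(\<lambda>x. \<bar>\<phi> x\<bar>) summable_on X" "(\<lambda>y. \<bar>\<psi> y\<bar>) summable_on Y"
  shows "((\<lambda>(x, y). \<phi> x * \<psi> y) has_sum (infsum \<phi> X * infsum \<psi> Y)) (X \<times> Y)"
    and "(\<lambda>(x, y). \<bar>\<phi> x * \<psi> y\<bar>) summable_on (X \<times> Y)"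
proof -
  have "(\<lambda>y. \<bar>\<phi> x\<bar> * \<bar>\<psi> y\<bar>) summable_on Y" for x
    using summable_on_cmult_right[OF assms(2)] by simp
  moreover have "(\<lambda>x. \<bar>\<phi> x\<bar> * infsum (\<lambda>y. \<bar>\<psi> y\<bar>) Y) summable_on X"
    using summable_on_cmult_left[OF assms(1)] by simp
  ultimately have abs: "(\<lambda>z. norm ((\<lambda>(x, y). \<phi> x * \<psi> y) z)) summable_on X \<times> Y"
    by (intro Infinite_Sum.abs_summable_on_Sigma_iff[where A=X and B="\<lambda>_. Y", THEN iffD2])
       (simp_all add: abs_mult infsum_cmult_right infsum_nonneg assms(2))
  then show "(\<lambda>(x, y). \<bar>\<phi> x * \<psi> y\<bar>) summable_on (X \<times> Y)"
    by (simp add: case_prod_unfold)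
  have sm: "(\<lambda>(x, y). \<phi> x * \<psi> y) summable_on (X \<times> Y)"
    using abs abs_summable_summable by blast
  have "infsum (\<lambda>(x, y). \<phi> x * \<psi> y) (X \<times> Y) = (\<Sum>\<^sub>\<infinity>x\<in>X. \<Sum>\<^sub>\<infinity>y\<in>Y. \<phi> x * \<psi> y)"
    using infsum_Sigma'_banach[OF sm] by simp
  also have "\<dots> = infsum \<phi> X * infsum \<psi> Y"
    by (simp add: infsum_cmult_right' infsum_cmult_left')
  finally show "((\<lambda>(x, y). \<phi> x * \<psi> y) has_sum (infsum \<phi> X * infsum \<psi> Y)) (X \<times> Y)"
    using sm by (metis has_sum_infsum)
qed

lemma has_sum_prod_list_power:
  fixes \<phi> :: "'x \<Rightarrow> real"
  assumes "(\<lambda>x. \<bar>\<phi> x\<bar>) summable_on X"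
  shows "((\<lambda>l. prod_list (map \<phi> l)) has_sum (infsum \<phi> X) ^ k) {l. length l = k \<and> set l \<subseteq> X}
    \<and> (\<lambda>l. \<bar>prod_list (map \<phi> l)\<bar>) summable_on {l. length l = k \<and> set l \<subseteq> X}"
proof (induction k)
  case 0
  have "{l. length l = 0 \<and> set l \<subseteq> X} = {[]}" by auto
  then show ?case
    using has_sum_finite[of "{[]}" "\<lambda>l. prod_list (map \<phi> l)"] by simp
next
  case (Suc k)
  let ?L = "{l. length l = k \<and> set l \<subseteq> X}" and ?P = "\<lambda>l. prod_list (map \<phi> l)"
  have bij: "bij_betw (\<lambda>(x, l). x # l) (X \<times> ?L) {l. length l = Suc k \<and> set l \<subseteq> X}"
  proof -
    have "l \<in> (\<lambda>(x, l). x # l) ` (X \<times> ?L)" if "length l = Suc k" "set l \<subseteq> X" for l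
      using that by (cases l) (auto simp: image_def)
    then show ?thesis
      by (auto simp: bij_betw_def inj_on_def)
  qed
  have "infsum ?P ?L = (infsum \<phi> X) ^ k"
    using Suc.IH infsumI by blast
  with has_sum_product_abs[OF assms, of ?P ?L] Suc.IH
  have "((\<lambda>z. ?P ((\<lambda>(x, l). x # l) z)) has_sum (infsum \<phi> X) ^ Suc k) (X \<times> ?L)"
    and "(\<lambda>z. \<bar>?P ((\<lambda>(x, l). x # l) z)\<bar>) summable_on (X \<times> ?L)"
    by (simp_all add: case_prod_unfold)
  then show ?case
    using has_sum_reindex_bij_betw[OF bij, where f="?P"]
      summable_on_reindex_bij_betw[OF bij, where f="\<lambda>l. \<bar>?P l\<bar>"]
    by simp
qed

lemma has_sum_prod_PiE_abs:
  fixes \<phi> :: "'i \<Rightarrow> 'x \<Rightarrow> real"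
  assumes "finite I" "\<And>i. i \<in> I \<Longrightarrow> (\<lambda>x. \<bar>\<phi> i x\<bar>) summable_on X i"
  shows "((\<lambda>M. \<Prod>i\<in>I. \<phi> i (M i)) has_sum (\<Prod>i\<in>I. infsum (\<phi> i) (X i))) (PiE I X)
     \<and> (\<lambda>M. \<bar>\<Prod>i\<in>I. \<phi> i (M i)\<bar>) summable_on PiE I X"
  using assms
proof (induction I rule: finite_induct)
  case empty
  then show ?case
    using has_sum_finite[of "{\<lambda>x. undefined}" "\<lambda>M. 1::real"] by simp
next
  case (insert i F)
  let ?P = "\<lambda>M. \<Prod>i\<in>F. \<phi> i (M i)" and ?upd = "\<lambda>(M, y). M(i := y)"
  have IH: "(?P has_sum (\<Prod>i\<in>F. infsum (\<phi> i) (X i))) (PiE F X)"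
    "(\<lambda>M. \<bar>?P M\<bar>) summable_on PiE F X"
    using insert by auto
  have bij: "bij_betw ?upd (PiE F X \<times> X i) (PiE (insert i F) X)"
    unfolding bij_betw_def
  proof
    show "inj_on ?upd (PiE F X \<times> X i)"
      by (rule inj_combinator'[OF insert(2)])
    show "?upd ` (PiE F X \<times> X i) = PiE (insert i F) X"
      unfolding PiE_insert_eq
      by (subst swap_product [symmetric]) (simp add: image_image case_prod_unfold)
  qed
  have "(\<Prod>j\<in>insert i F. \<phi> j ((M(i := y)) j)) = ?P M * \<phi> i y" for M y
  proof -
    have "(\<Prod>j\<in>F. \<phi> j ((M(i := y)) j)) = ?P M"
      using insert(2) by (intro prod.cong) auto
    then show ?thesis
      using insert(1,2) by (simp add: mult.commute)
  qed
  then have term_eq: "(\<lambda>z. (\<lambda>M. \<Prod>j\<in>insert i F. \<phi> j (M j)) (?upd z)) = (\<lambda>(M, y). ?P M * \<phi> i y)"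
    by (auto simp: fun_eq_iff)
  have "infsum ?P (PiE F X) = (\<Prod>i\<in>F. infsum (\<phi> i) (X i))"
    using IH(1) by (rule infsumI)
  then have val: "infsum ?P (PiE F X) * infsum (\<phi> i) (X i) = (\<Prod>j\<in>insert i F. infsum (\<phi> j) (X j))"
    using insert(1,2) by (simp add: mult.commute)
  have "(\<lambda>x. \<bar>\<phi> i x\<bar>) summable_on X i"
    using insert.prems by simp
  note product = has_sum_product_abs[OF IH(2) this]
  have "((\<lambda>z. (\<lambda>M. \<Prod>j\<in>insert i F. \<phi> j (M j)) (?upd z)) has_sum
          (\<Prod>j\<in>insert i F. infsum (\<phi> j) (X j))) (PiE F X \<times> X i)"
    unfolding term_eq val [symmetric] by (rule product(1))
  moreover have "(\<lambda>z. \<bar>(\<lambda>M. \<Prod>j\<in>insert i F. \<phi> j (M j)) (?upd z)\<bar>) summable_on (PiE F X \<times> X i)"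
    using product(2) fun_cong[OF term_eq] by (simp only: case_prod_unfold)
  ultimately show ?case
    using has_sum_reindex_bij_betw[OF bij, where f="\<lambda>M. \<Prod>j\<in>insert i F. \<phi> j (M j)"]
      summable_on_reindex_bij_betw[OF bij, where f="\<lambda>M. \<bar>\<Prod>j\<in>insert i F. \<phi> j (M j)\<bar>"]
    by simp
qed

lemma has_sum_coord_fibre_iff:
  fixes E :: "('d \<Rightarrow> nat) \<Rightarrow> real"
  assumes "\<And>\<mu>. \<mu> j0 \<noteq> 0 \<Longrightarrow> E \<mu> = 0"
  shows "((\<lambda>\<mu>. E (\<mu>(j0 := 0))) has_sum t) {\<mu>. \<mu> j0 = k} \<longleftrightarrow> (E has_sum t) UNIV"
proof -
  have "((\<lambda>\<mu>. E (\<mu>(j0 := 0))) has_sum t) {\<mu>. \<mu> j0 = k} \<longleftrightarrow> (E has_sum t) {\<mu>. \<mu> j0 = 0}"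
    by (rule has_sum_reindex_bij_witness[where i="\<lambda>\<mu>. \<mu>(j0 := k)" and j="\<lambda>\<mu>. \<mu>(j0 := 0)"]) auto
  also have "\<dots> \<longleftrightarrow> (E has_sum t) UNIV"
    by (rule has_sum_cong_neutral) (use assms in auto)
  finally show ?thesis .
qed

section \<open>Monomials and the sup-norm\<close>

lemma infnorm_Max_cart: "infnorm (x::real^'n) = Max (range (\<lambda>i. \<bar>x $ i\<bar>))"
proof -
  have "{\<bar>x $ i\<bar> |i. i \<in> UNIV} = range (\<lambda>i. \<bar>x $ i\<bar>)" by auto
  then show ?thesis unfolding infnorm_cart by (simp add: cSup_eq_Max)
qed

lemma infnorm_le_iff_cart: "infnorm (x::real^'n) \<le> r \<longleftrightarrow> (\<forall>i. \<bar>x $ i\<bar> \<le> r)"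
  unfolding infnorm_Max_cart by simp

lemma infnorm_less_iff_cart: "infnorm (x::real^'n) < r \<longleftrightarrow> (\<forall>i. \<bar>x $ i\<bar> < r)"
  unfolding infnorm_Max_cart by simp

lemma monom_val_add: "monom_val (\<lambda>j. \<mu> j + \<mu>' j) y = monom_val \<mu> y * monom_val \<mu>' y"
  unfolding monom_val_def by (simp add: power_add prod.distrib)

lemma monom_val_zero [simp]: "monom_val (\<lambda>_. 0) y = 1"
  unfolding monom_val_def by simp

lemma monom_val_sum:
  assumes "finite S"
  shows "monom_val (\<lambda>j. \<Sum>i\<in>S. \<phi> i j) y = (\<Prod>i\<in>S. monom_val (\<phi> i) y)"
  using assms by (induction S rule: finite_induct) (simp_all add: monom_val_add)

lemma monom_val_sum_list:
  "monom_val (\<lambda>j. sum_list (map (\<lambda>m. m j) l)) y = prod_list (map (\<lambda>m. monom_val m y) l)"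
  by (induction l) (simp_all add: monom_val_add)

lemma monom_val_upd_coord:
  fixes y :: "real^'d::finite"
  shows "monom_val \<mu> (\<chi> j. if j = j0 then s else y $ j) = s ^ \<mu> j0 * monom_val (\<mu>(j0 := 0)) y"
proof -
  have "monom_val \<mu> (\<chi> j. if j = j0 then s else y $ j) = s ^ \<mu> j0 * (\<Prod>j\<in>UNIV-{j0}. (y $ j) ^ \<mu> j)"
   and "monom_val (\<mu>(j0 := 0)) y = (\<Prod>j\<in>UNIV-{j0}. (y $ j) ^ \<mu> j)"
    unfolding monom_val_def by (subst prod.remove[of UNIV j0]; auto intro!: prod.cong)+
  then show ?thesis by simp
qed

lemma abs_monom_val: "\<bar>monom_val \<mu> y\<bar> = mono_abs \<mu> y"
  unfolding monom_val_def mono_abs_def by (simp add: abs_prod power_abs)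

lemma mono_abs_nonneg: "mono_abs \<mu> y \<ge> 0"
  unfolding mono_abs_def by (simp add: prod_nonneg)

lemma mono_abs_scaleR: "mono_abs \<mu> (c *\<^sub>R y) = \<bar>c\<bar> ^ mi_order \<mu> * mono_abs \<mu> y"
  unfolding mono_abs_def mi_order_def
  by (simp add: abs_mult power_mult_distrib prod.distrib power_sum)

lemma one_le_mi_order_iff: "1 \<le> mi_order \<mu> \<longleftrightarrow> \<mu> \<noteq> (\<lambda>_. 0)"
proof -
  have "mi_order \<mu> = 0 \<longleftrightarrow> (\<forall>j. \<mu> j = 0)"
    unfolding mi_order_def by simp
  then show ?thesis by (auto simp: fun_eq_iff)
qed

lemma mi_order_sum_list: "mi_order (\<lambda>j. sum_list (map (\<lambda>m. m j) l)) = sum_list (map mi_order l)"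
  by (induction l) (auto simp: mi_order_def sum.distrib)

lemma monom_val_0: "monom_val \<mu> 0 = (if \<mu> = (\<lambda>_. 0) then 1 else 0)"
proof (cases "\<mu> = (\<lambda>_. 0)")
  case False
  then obtain j where "\<mu> j \<noteq> 0" by auto
  then show ?thesis
    using False unfolding monom_val_def by (auto simp: prod_zero_iff)
qed (simp add: monom_val_def)

lemma mono_abs_0: "1 \<le> mi_order \<mu> \<Longrightarrow> mono_abs \<mu> 0 = 0"
  by (metis abs_monom_val abs_zero monom_val_0 one_le_mi_order_iff)

lemma prod_list_map_mult:
  "prod_list (map (\<lambda>m. f m * g m) l) = prod_list (map f l) * (prod_list (map g l) :: real)"
  by (induction l) (auto simp: mult_ac)

lemma abs_prod_list: "\<bar>prod_list (map f l)\<bar> = prod_list (map (\<lambda>m. \<bar>f m\<bar>) l :: real list)"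
  by (induction l) (auto simp: abs_mult)

lemma length_le_sum_list_map:
  "(\<And>x. x \<in> set xs \<Longrightarrow> 1 \<le> f x) \<Longrightarrow> length xs \<le> sum_list (map f xs)"
proof (induction xs)
  case (Cons x xs)
  then have "1 \<le> f x" "length xs \<le> sum_list (map f xs)" by auto
  then show ?case by simp
qed simp

section \<open>Power series in several variables\<close>

definition tail :: "(('d::finite \<Rightarrow> nat) \<Rightarrow> real) \<Rightarrow> real^'d \<Rightarrow> real" where
  "tail a y = (\<Sum>\<^sub>\<infinity>\<mu>\<in>{\<mu>. 1 \<le> mi_order \<mu>}. a \<mu> * monom_val \<mu> y)"

definition abs_tail :: "(('d::finite \<Rightarrow> nat) \<Rightarrow> real) \<Rightarrow> real^'d \<Rightarrow> real" where
  "abs_tail a y = (\<Sum>\<^sub>\<infinity>\<mu>\<in>{\<mu>. 1 \<le> mi_order \<mu>}. \<bar>a \<mu>\<bar> * mono_abs \<mu> y)"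

definition coeffs_of_type :: "(('d::finite \<Rightarrow> nat) \<Rightarrow> real) \<Rightarrow> real \<Rightarrow> real \<Rightarrow> bool" where
  "coeffs_of_type a t1 t2 \<longleftrightarrow>
     (\<forall>y. infnorm y \<le> t1 \<longrightarrow> (\<lambda>\<mu>. \<bar>a \<mu> * monom_val \<mu> y\<bar>) summable_on UNIV \<and> abs_tail a y \<le> t2)"

lemma coeffs_of_type_centered:
  fixes z0 :: "real^'d::finite"
  shows "coeffs_of_type a t1 t2 \<longleftrightarrow>
    (\<forall>z. infnorm (z - z0) \<le> t1 \<longrightarrow> (\<lambda>\<mu>. \<bar>a \<mu> * monom_val \<mu> (z - z0)\<bar>) summable_on UNIV \<and>
       (\<Sum>\<^sub>\<infinity>\<mu>\<in>{\<mu>. mi_order \<mu> \<ge> 1}. \<bar>a \<mu>\<bar> * mono_abs \<mu> (z - z0)) \<le> t2)"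
    (is "_ \<longleftrightarrow> ?centered")
proof
  assume "coeffs_of_type a t1 t2"
  then show ?centered
    unfolding coeffs_of_type_def abs_tail_def by blast
next
  assume centered: ?centered
  show "coeffs_of_type a t1 t2"
    unfolding coeffs_of_type_def abs_tail_def
    using centered[rule_format, of "z0 + y" for y] by simp
qed

lemma of_type_iff_coeffs_of_type:
  "of_type U f t1 t2 \<longleftrightarrow> (\<forall>z\<in>U. t1 z > 0 \<and> t2 z > 0) \<and> real_analytic_on U f \<and>
     (\<forall>z0\<in>U. \<forall>a. power_series_at f z0 a \<longrightarrow> coeffs_of_type a (t1 z0) (t2 z0))"
  unfolding of_type_def coeffs_of_type_centered[symmetric] ..

lemma abs_tail_nonneg: "abs_tail a y \<ge> 0"
  unfolding abs_tail_def by (intro infsum_nonneg mult_nonneg_nonneg abs_ge_zero mono_abs_nonneg)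

lemma coeffs_of_type_summable:
  assumes "coeffs_of_type a t1 t2" "infnorm y \<le> t1"
  shows "(\<lambda>\<mu>. \<bar>a \<mu>\<bar> * mono_abs \<mu> y) summable_on S"
proof -
  have "(\<lambda>\<mu>. \<bar>a \<mu> * monom_val \<mu> y\<bar>) summable_on UNIV"
    using assms unfolding coeffs_of_type_def by blast
  then have "(\<lambda>\<mu>. \<bar>a \<mu>\<bar> * mono_abs \<mu> y) summable_on UNIV"
    by (simp add: abs_mult abs_monom_val)
  then show ?thesis
    by (rule summable_on_subset_banach) simp
qed

lemma coeffs_of_type_abs_tail_le:
  "coeffs_of_type a t1 t2 \<Longrightarrow> infnorm y \<le> t1 \<Longrightarrow> abs_tail a y \<le> t2"
  unfolding coeffs_of_type_def by blast

lemma abs_tail_0: "abs_tail a 0 = 0"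
  unfolding abs_tail_def by (intro infsum_0) (simp add: mono_abs_0)

text \<open>All terms of the tail have order at least one, so shrinking the argument by a
  factor \<open>l \<le> 1\<close> shrinks the tail by at least the factor \<open>l\<close>.\<close>

lemma abs_tail_le_scaled:
  assumes a: "coeffs_of_type a t1 t2" and "t1 > 0" and y: "infnorm y \<le> t1"
  shows "abs_tail a y \<le> infnorm y / t1 * t2"
proof (cases "y = 0")
  case True
  then show ?thesis by (simp add: abs_tail_0 infnorm_0)
next
  case False
  define l where "l = infnorm y / t1"
  have "infnorm y > 0"
    using False infnorm_pos_lt by blast
  then have l: "0 < l" "l \<le> 1"
    using y \<open>t1 > 0\<close> by (auto simp: l_def)
  define y' where "y' = (1 / l) *\<^sub>R y"
  have y_eq: "y = l *\<^sub>R y'" using l by (simp add: y'_def)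
  have y': "infnorm y' \<le> t1"
    using \<open>infnorm y > 0\<close> \<open>t1 > 0\<close> by (simp add: y'_def infnorm_mul l_def)
  have "\<bar>a \<mu>\<bar> * mono_abs \<mu> y \<le> l * (\<bar>a \<mu>\<bar> * mono_abs \<mu> y')" if "1 \<le> mi_order \<mu>" for \<mu>
  proof -
    have "l ^ mi_order \<mu> \<le> l"
      using that l power_decreasing[of 1 "mi_order \<mu>" l] by simp
    then have "l ^ mi_order \<mu> * (\<bar>a \<mu>\<bar> * mono_abs \<mu> y') \<le> l * (\<bar>a \<mu>\<bar> * mono_abs \<mu> y')"
      by (intro mult_right_mono) (simp_all add: mono_abs_nonneg)
    then show ?thesis
      unfolding y_eq mono_abs_scaleR using l by (simp add: mult_ac)
  qed
  then have "abs_tail a y \<le> (\<Sum>\<^sub>\<infinity>\<mu>\<in>{\<mu>. 1 \<le> mi_order \<mu>}. l * (\<bar>a \<mu>\<bar> * mono_abs \<mu> y'))"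
    unfolding abs_tail_def
    by (intro infsum_mono coeffs_of_type_summable[OF a y] summable_on_cmult_right
          coeffs_of_type_summable[OF a y']) auto
  also have "\<dots> = l * abs_tail a y'"
    unfolding abs_tail_def by (intro infsum_cmult_right coeffs_of_type_summable[OF a y'])
  also have "\<dots> \<le> l * t2"
    using coeffs_of_type_abs_tail_le[OF a y'] l by simp
  finally show ?thesis by (simp add: l_def)
qed

lemma abs_tail_bound:
  assumes "(\<lambda>\<mu>. \<bar>a \<mu> * monom_val \<mu> y\<bar>) summable_on UNIV"
  shows "\<bar>tail a y\<bar> \<le> abs_tail a y"
proof -
  have "(\<lambda>\<mu>. norm (a \<mu> * monom_val \<mu> y)) summable_on {\<mu>. 1 \<le> mi_order \<mu>}"
    using summable_on_subset_banach[OF assms] by simp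
  from norm_infsum_bound[OF this] show ?thesis
    unfolding tail_def abs_tail_def by (simp add: abs_mult abs_monom_val)
qed

lemma has_sum_monom_series_at_0:
  assumes "((\<lambda>\<mu>. a \<mu> * monom_val \<mu> (0::real^'d::finite)) has_sum s) UNIV"
  shows "s = a (\<lambda>_. 0)"
proof -
  have "((\<lambda>\<mu>. a \<mu> * monom_val \<mu> (0::real^'d)) has_sum s) {\<lambda>_. 0}"
    using assms by (subst (asm) has_sum_cong_neutral[where T="{\<lambda>_. 0}"]) (auto simp: monom_val_0)
  moreover have "((\<lambda>\<mu>. a \<mu> * monom_val \<mu> (0::real^'d)) has_sum a (\<lambda>_. 0)) {\<lambda>_. 0}"
    using has_sum_finite[of "{\<lambda>_. 0}" "\<lambda>\<mu>. a \<mu> * monom_val \<mu> (0::real^'d)"] by simp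
  ultimately show ?thesis
    using has_sum_unique by blast
qed

lemma has_sum_monom_series_increment:
  fixes y :: "real^'d::finite"
  assumes "((\<lambda>\<mu>. a \<mu> * monom_val \<mu> y) has_sum s) UNIV"
    and "((\<lambda>\<mu>. a \<mu> * monom_val \<mu> 0) has_sum s0) UNIV"
  shows "s - s0 = tail a y"
proof -
  have univ: "UNIV = insert (\<lambda>_. 0) {\<mu>::'d \<Rightarrow> nat. 1 \<le> mi_order \<mu>}"
    using one_le_mi_order_iff by auto
  have "(\<lambda>\<mu>. a \<mu> * monom_val \<mu> y) summable_on {\<mu>. 1 \<le> mi_order \<mu>}"
    using has_sum_imp_summable[OF assms(1)] by (rule summable_on_subset_banach) simp
  then have "infsum (\<lambda>\<mu>. a \<mu> * monom_val \<mu> y) UNIV = a (\<lambda>_. 0) + tail a y"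
    unfolding univ tail_def by (subst infsum_insert) (auto simp: mi_order_def)
  then show ?thesis
    using assms(1) has_sum_monom_series_at_0[OF assms(2)] by (simp add: infsumI)
qed

section \<open>Uniqueness of power series\<close>

lemma powser_eq_0_coeffs_eq_0:
  fixes G :: "nat \<Rightarrow> real"
  assumes "r > 0" and "\<And>s. \<bar>s\<bar> < r \<Longrightarrow> (\<lambda>k. G k * s ^ k) sums 0"
  shows "G k = 0"
proof (cases "k = 0")
  case True
  then show ?thesis
    using assms(2)[of 0] assms(1) by simp
next
  case False
  show ?thesis
  proof (rule ccontr)
    assume "G k \<noteq> 0"
    obtain s where s: "0 < s" "\<And>z::real. z \<in> cball 0 s - {0} \<Longrightarrow> (\<lambda>_. 0::real) z \<noteq> 0"
      by (rule powser_0_nonzero[of r 0 G "\<lambda>_. 0" k]) (use assms False \<open>G k \<noteq> 0\<close> in auto)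
    then show False
      using s(2)[of s] by simp
  qed
qed

text \<open>Freezing the exponent \<open>k\<close> of coordinate \<open>j\<^sub>0\<close>: the series in the remaining coordinates
  with coefficients \<open>d (\<mu>(j\<^sub>0 := k))\<close> is the \<open>k\<close>-th coefficient of a vanishing power series
  in the single variable \<open>y\<^sub>j\<^sub>0\<close>, hence vanishes itself.\<close>

lemma has_sum_0_coordinate_slice:
  fixes d :: "('d::finite \<Rightarrow> nat) \<Rightarrow> real"
  assumes r: "r > 0"
    and hs: "\<And>y::real^'d. infnorm y < r \<Longrightarrow> ((\<lambda>\<mu>. d \<mu> * monom_val \<mu> y) has_sum 0) UNIV"
    and y: "infnorm y < r"
  shows "((\<lambda>\<mu>. (if \<mu> j0 = 0 then d (\<mu>(j0 := k)) else 0) * monom_val \<mu> y) has_sum 0) UNIV"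
proof -
  define Y where "Y s = (\<chi> j. if j = j0 then s else y $ j)" for s
  have Y: "infnorm (Y s) < r" if "\<bar>s\<bar> < r" for s
    using that y unfolding infnorm_less_iff_cart Y_def by auto
  define E where "E k \<mu> = (if \<mu> j0 = 0 then d (\<mu>(j0 := k)) else 0) * monom_val \<mu> y" for k \<mu>
  define fib where "fib k = {\<mu>::'d \<Rightarrow> nat. \<mu> j0 = k}" for k
  have fib_val: "d \<mu> * monom_val \<mu> (Y s) = s ^ k * E k (\<mu>(j0 := 0))" if "\<mu> \<in> fib k" for \<mu> k s
  proof -
    have "\<mu>(j0 := k) = \<mu>" using that by (auto simp: fib_def)
    then show ?thesis
      using that unfolding E_def fib_def Y_def monom_val_upd_coord by simp
  qed
  have reindex: "((\<lambda>\<mu>. E k (\<mu>(j0 := 0))) has_sum t) (fib k) \<longleftrightarrow> (E k has_sum t) UNIV" for k t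
    unfolding fib_def by (rule has_sum_coord_fibre_iff) (simp add: E_def)
  have "E k summable_on UNIV" for k
  proof -
    define s0 where "s0 = r / 2"
    have s0: "\<bar>s0\<bar> < r" "s0 \<noteq> 0" using r by (auto simp: s0_def)
    have "(\<lambda>\<mu>. d \<mu> * monom_val \<mu> (Y s0)) summable_on UNIV"
      using hs[OF Y[OF s0(1)]] by (rule has_sum_imp_summable)
    then have "(\<lambda>\<mu>. d \<mu> * monom_val \<mu> (Y s0)) summable_on fib k"
      by (rule summable_on_subset_banach) simp
    then have "(\<lambda>\<mu>. s0 ^ k * E k (\<mu>(j0 := 0))) summable_on fib k"
      by (rule summable_on_cong[THEN iffD1, rotated]) (simp add: fib_val)
    then have "(\<lambda>\<mu>. E k (\<mu>(j0 := 0))) summable_on fib k"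
      using summable_on_cmult_right'[of "s0 ^ k" "\<lambda>\<mu>. E k (\<mu>(j0 := 0))" "fib k"] s0(2) by simp
    then show ?thesis using reindex unfolding summable_on_def by blast
  qed
  then have EG: "(E k has_sum infsum (E k) UNIV) UNIV" for k
    by simp
  have "(\<lambda>k. infsum (E k) UNIV * s ^ k) sums 0" if "\<bar>s\<bar> < r" for s
  proof -
    have "((\<lambda>\<mu>. d \<mu> * monom_val \<mu> (Y s)) has_sum (s ^ k * infsum (E k) UNIV)) (fib k)" for k
      using has_sum_cmult_right[OF reindex[THEN iffD2, OF EG], of "s ^ k"]
      by (rule has_sum_cong[THEN iffD1, rotated]) (simp add: fib_val)
    then have "((\<lambda>k. s ^ k * infsum (E k) UNIV) has_sum 0) UNIV"
      by (intro has_sum_group_fibres[OF hs[OF Y[OF that]], where p="\<lambda>\<mu>. \<mu> j0"])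
         (auto simp: fib_def)
    then show ?thesis by (simp add: has_sum_imp_sums mult.commute)
  qed
  then have "infsum (E k) UNIV = 0"
    by (rule powser_eq_0_coeffs_eq_0[OF r])
  then show ?thesis
    using EG[of k] unfolding E_def [abs_def] by simp
qed

lemma monom_series_eq_0_imp_coeffs_eq_0:
  fixes r :: real and d :: "('d::finite \<Rightarrow> nat) \<Rightarrow> real"
  assumes "finite S" "r > 0"
    and "\<And>\<mu>. (\<exists>j. j \<notin> S \<and> \<mu> j \<noteq> 0) \<Longrightarrow> d \<mu> = 0"
    and "\<And>y::real^'d. infnorm y < r \<Longrightarrow> ((\<lambda>\<mu>. d \<mu> * monom_val \<mu> y) has_sum 0) UNIV"
  shows "d = (\<lambda>_. 0)"
  using assms(1,3,4)
proof (induction S arbitrary: d rule: finite_induct)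
  case empty
  have "d \<mu> = 0" for \<mu>
  proof (cases "\<mu> = (\<lambda>_. 0)")
    case True
    then show ?thesis
      using has_sum_monom_series_at_0[OF empty.prems(2)[of 0]] assms(2) by (simp add: infnorm_0)
  qed (use empty.prems(1) in \<open>auto simp: fun_eq_iff\<close>)
  then show ?case by auto
next
  case (insert j0 S)
  define dk where "dk k \<mu> = (if \<mu> j0 = 0 then d (\<mu>(j0 := k)) else 0)" for k \<mu>
  have "dk k = (\<lambda>_. 0)" for k
  proof (rule insert.IH)
    show "dk k \<mu> = 0" if outside: "\<exists>j. j \<notin> S \<and> \<mu> j \<noteq> 0" for \<mu>
    proof -
      obtain j where j: "j \<notin> S" "\<mu> j \<noteq> 0"
        using outside by blast
      show ?thesis
      proof (cases "j = j0")
        case False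
        then have "\<exists>j'. j' \<notin> insert j0 S \<and> (\<mu>(j0 := k)) j' \<noteq> 0"
          using j by (intro exI[of _ j]) simp
        then have "d (\<mu>(j0 := k)) = 0"
          by (rule insert.prems(1))
        then show ?thesis by (simp add: dk_def)
      qed (use j in \<open>simp add: dk_def\<close>)
    qed
    show "((\<lambda>\<mu>. dk k \<mu> * monom_val \<mu> y) has_sum 0) UNIV" if "infnorm y < r" for y
      unfolding dk_def by (rule has_sum_0_coordinate_slice[OF assms(2) insert.prems(2) that])
  qed
  moreover have "d \<mu> = dk (\<mu> j0) (\<mu>(j0 := 0))" for \<mu>
    by (simp add: dk_def)
  ultimately show ?case by auto
qed

lemma power_series_at_unique:
  fixes z0 :: "real^'d::finite"
  assumes "power_series_at f z0 a" "power_series_at f z0 c"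
  shows "a = c"
proof -
  obtain r1 where r1: "r1 > 0"
    "\<And>z. infnorm (z - z0) < r1 \<Longrightarrow> ((\<lambda>\<mu>. a \<mu> * monom_val \<mu> (z - z0)) has_sum f z) UNIV"
    using assms(1) unfolding power_series_at_def by blast
  obtain r2 where r2: "r2 > 0"
    "\<And>z. infnorm (z - z0) < r2 \<Longrightarrow> ((\<lambda>\<mu>. c \<mu> * monom_val \<mu> (z - z0)) has_sum f z) UNIV"
    using assms(2) unfolding power_series_at_def by blast
  have "(\<lambda>\<mu>. a \<mu> - c \<mu>) = (\<lambda>_. 0)"
  proof (rule monom_series_eq_0_imp_coeffs_eq_0[of UNIV "min r1 r2"])
    fix y :: "real^'d" assume "infnorm y < min r1 r2"
    then have "((\<lambda>\<mu>. a \<mu> * monom_val \<mu> y + - (c \<mu> * monom_val \<mu> y)) has_sum f (z0 + y) + - f (z0 + y)) UNIV"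
      using r1(2)[of "z0 + y"] r2(2)[of "z0 + y"] by (intro has_sum_add has_sum_uminusI) auto
    then show "((\<lambda>\<mu>. (a \<mu> - c \<mu>) * monom_val \<mu> y) has_sum 0) UNIV"
      by (simp add: algebra_simps)
  qed (use r1 r2 in auto)
  then show ?thesis by (auto simp: fun_eq_iff)
qed

lemma power_series_at_common_radius:
  fixes f :: "real^'d::finite \<Rightarrow> real^'n::finite"
  assumes "\<And>i. power_series_at (\<lambda>z. f z $ i) z0 (A i)"
  obtains r where "r > 0"
    "\<And>i z. infnorm (z - z0) < r \<Longrightarrow> ((\<lambda>\<mu>. A i \<mu> * monom_val \<mu> (z - z0)) has_sum f z $ i) UNIV"
proof -
  have "\<forall>i. \<exists>r>0. \<forall>z. infnorm (z - z0) < r \<longrightarrow>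
      ((\<lambda>\<mu>. A i \<mu> * monom_val \<mu> (z - z0)) has_sum f z $ i) UNIV"
    using assms unfolding power_series_at_def by blast
  then obtain R where R: "\<And>i. R i > 0"
    "\<And>i z. infnorm (z - z0) < R i \<Longrightarrow> ((\<lambda>\<mu>. A i \<mu> * monom_val \<mu> (z - z0)) has_sum f z $ i) UNIV"
    by metis
  have "Min (range R) \<le> R i" for i
    by simp
  with R show ?thesis
    by (intro that[of "Min (range R)"]) force+
qed

lemma of_type_pos:
  assumes "of_type U f t1 t2" "z \<in> U"
  shows "t1 z > 0" "t2 z > 0"
  using assms(1)[unfolded of_type_def, THEN conjunct1] assms(2) by auto

lemma of_type_power_series_at:
  assumes "of_type U f t1 t2" "z0 \<in> U"
  shows "\<exists>a. power_series_at f z0 a"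
  using assms(1)[unfolded of_type_def, THEN conjunct2, THEN conjunct1] assms(2)
  unfolding real_analytic_on_def by (rule bspec)

lemma of_type_coeffs:
  assumes "of_type U f t1 t2" "z0 \<in> U" "power_series_at f z0 a"
  shows "coeffs_of_type a (t1 z0) (t2 z0)"
  using assms(1)[unfolded of_type_iff_coeffs_of_type, THEN conjunct2, THEN conjunct2] assms(2,3)
  by simp

text \<open>By uniqueness of power series it suffices to bound a single series at each point.\<close>

lemma of_typeI:
  assumes "\<And>z0. z0 \<in> U \<Longrightarrow> \<exists>a. power_series_at f z0 a \<and> coeffs_of_type a (t1 z0) (t2 z0)"
    and "\<And>z. z \<in> U \<Longrightarrow> t1 z > 0 \<and> t2 z > 0"
  shows "of_type U f t1 t2"
proof -
  have "coeffs_of_type c (t1 z0) (t2 z0)" if z0: "z0 \<in> U" and c: "power_series_at f z0 c" for z0 c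
  proof -
    obtain a where a: "power_series_at f z0 a" "coeffs_of_type a (t1 z0) (t2 z0)"
      using assms(1) z0 by blast
    then show ?thesis
      using power_series_at_unique[OF a(1) c] by simp
  qed
  moreover have "real_analytic_on U f"
    unfolding real_analytic_on_def using assms(1) by blast
  ultimately show ?thesis
    unfolding of_type_iff_coeffs_of_type using assms(2) by simp
qed

section \<open>Substituting power series into a power series\<close>

locale power_series_composition =
  fixes A :: "'n::finite \<Rightarrow> ('d::finite \<Rightarrow> nat) \<Rightarrow> real" and B :: "('n \<Rightarrow> nat) \<Rightarrow> real"
    and t1 t2 s1 s2 :: real
  assumes pos: "t1 > 0" "t2 > 0" "s1 > 0"
    and inner: "\<And>i. coeffs_of_type (A i) t1 t2"
    and outer: "coeffs_of_type B s1 s2"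
begin

text \<open>Multiplying out \<open>\<Sum>\<^sub>\<nu> B\<^sub>\<nu> \<Prod>\<^sub>i (\<Sum>\<^sub>\<mu>\<^sub>\<noteq>\<^sub>0 A\<^sub>i\<^sub>\<mu> y\<^sup>\<mu>)\<^sup>\<nu>\<^sup>\<^sub>i\<close> produces one term for every choice
  of a list of \<open>\<nu>\<^sub>i\<close> nonconstant multi-indices for each \<open>i\<close>, one multi-index per factor.\<close>

definition expansions :: "('n \<Rightarrow> ('d \<Rightarrow> nat) list) set" where
  "expansions = {M. \<forall>i. set (M i) \<subseteq> {\<mu>. 1 \<le> mi_order \<mu>}}"

definition outer_index :: "('n \<Rightarrow> ('d \<Rightarrow> nat) list) \<Rightarrow> 'n \<Rightarrow> nat" where
  "outer_index M = (\<lambda>i. length (M i))"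

definition exponent :: "('n \<Rightarrow> ('d \<Rightarrow> nat) list) \<Rightarrow> 'd \<Rightarrow> nat" where
  "exponent M = (\<lambda>j. \<Sum>i\<in>UNIV. sum_list (map (\<lambda>m. m j) (M i)))"

definition expansion_coeff :: "('n \<Rightarrow> ('d \<Rightarrow> nat) list) \<Rightarrow> real" where
  "expansion_coeff M = B (outer_index M) * (\<Prod>i\<in>UNIV. prod_list (map (A i) (M i)))"

definition expansion_term :: "real^'d \<Rightarrow> ('n \<Rightarrow> ('d \<Rightarrow> nat) list) \<Rightarrow> real" where
  "expansion_term y M = expansion_coeff M * monom_val (exponent M) y"

definition comp_coeff :: "('d \<Rightarrow> nat) \<Rightarrow> real" where
  "comp_coeff \<mu> = infsum expansion_coeff {M \<in> expansions. exponent M = \<mu>}"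

definition majorant :: "real^'d \<Rightarrow> real^'n" where
  "majorant y = (\<chi> i. abs_tail (A i) y)"

definition radius :: real where
  "radius = min t1 (s1 * t1 / t2)"

lemma radius_pos: "radius > 0"
  and radius_le: "radius \<le> t1" "radius \<le> s1 * t1 / t2"
  using pos unfolding radius_def by auto

lemma expansion_term_eq:
  "expansion_term y M = B (outer_index M) * (\<Prod>i\<in>UNIV. prod_list (map (\<lambda>m. A i m * monom_val m y) (M i)))"
proof -
  have "monom_val (exponent M) y = (\<Prod>i\<in>UNIV. monom_val (\<lambda>j. sum_list (map (\<lambda>m. m j) (M i))) y)"
    unfolding exponent_def by (rule monom_val_sum) simp
  also have "\<dots> = (\<Prod>i\<in>UNIV. prod_list (map (\<lambda>m. monom_val m y) (M i)))"
    by (simp only: monom_val_sum_list)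
  finally show ?thesis
    unfolding expansion_term_def expansion_coeff_def
    by (simp add: prod_list_map_mult prod.distrib mult_ac)
qed

lemma abs_expansion_term_eq:
  "\<bar>expansion_term y M\<bar> = \<bar>B (outer_index M)\<bar> *
     (\<Prod>i\<in>UNIV. prod_list (map (\<lambda>m. \<bar>A i m\<bar> * mono_abs m y) (M i)))"
  unfolding expansion_term_eq by (simp only: abs_mult abs_prod abs_prod_list abs_monom_val)

lemma has_sum_outer_fibre:
  fixes \<phi> :: "'n \<Rightarrow> ('d \<Rightarrow> nat) \<Rightarrow> real"
  assumes "\<And>i. (\<lambda>m. \<bar>\<phi> i m\<bar>) summable_on {\<mu>. 1 \<le> mi_order \<mu>}"
  shows "((\<lambda>M. b * (\<Prod>i\<in>UNIV. prod_list (map (\<phi> i) (M i)))) has_sum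
           (b * (\<Prod>i\<in>UNIV. (infsum (\<phi> i) {\<mu>. 1 \<le> mi_order \<mu>}) ^ \<nu> i)))
         {M \<in> expansions. outer_index M = \<nu>}"
proof -
  let ?L = "\<lambda>k. {l. length l = k \<and> set l \<subseteq> {\<mu>. 1 \<le> mi_order \<mu>}}"
  have fibre: "{M \<in> expansions. outer_index M = \<nu>} = PiE UNIV (\<lambda>i. ?L (\<nu> i))"
    by (auto simp: expansions_def outer_index_def PiE_iff fun_eq_iff)
  note power = has_sum_prod_list_power[OF assms]
  have powers: "infsum (\<lambda>l. prod_list (map (\<phi> i) l)) (?L (\<nu> i)) =
      (infsum (\<phi> i) {\<mu>. 1 \<le> mi_order \<mu>}) ^ \<nu> i" for i
    using power infsumI by blast
  have "((\<lambda>M. \<Prod>i\<in>UNIV. prod_list (map (\<phi> i) (M i))) has_sum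
      (\<Prod>i\<in>UNIV. infsum (\<lambda>l. prod_list (map (\<phi> i) l)) (?L (\<nu> i)))) (PiE UNIV (\<lambda>i. ?L (\<nu> i)))"
    using has_sum_prod_PiE_abs[of UNIV "\<lambda>i l. prod_list (map (\<phi> i) l)" "\<lambda>i. ?L (\<nu> i)"] power
    by simp
  then show ?thesis
    unfolding fibre powers by (rule has_sum_cmult_right)
qed

lemma mono_abs_majorant: "mono_abs \<nu> (majorant y) = (\<Prod>i\<in>UNIV. abs_tail (A i) y ^ \<nu> i)"
  unfolding mono_abs_def majorant_def by (simp add: abs_tail_nonneg)

lemma expansion_terms_outer_fibre:
  assumes "infnorm y \<le> t1"
  shows "(expansion_term y has_sum (B \<nu> * monom_val \<nu> (\<chi> i. tail (A i) y)))
           {M \<in> expansions. outer_index M = \<nu>}"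
    and "((\<lambda>M. \<bar>expansion_term y M\<bar>) has_sum (\<bar>B \<nu>\<bar> * mono_abs \<nu> (majorant y)))
           {M \<in> expansions. outer_index M = \<nu>}"
proof -
  have abs_summable: "(\<lambda>m. \<bar>A i m\<bar> * mono_abs m y) summable_on S" for i S
    by (rule coeffs_of_type_summable[OF inner assms])
  have "((\<lambda>M. B \<nu> * (\<Prod>i\<in>UNIV. prod_list (map (\<lambda>m. A i m * monom_val m y) (M i)))) has_sum
           (B \<nu> * monom_val \<nu> (\<chi> i. tail (A i) y))) {M \<in> expansions. outer_index M = \<nu>}"
  proof -
    have "(\<lambda>m. \<bar>A i m * monom_val m y\<bar>) summable_on {\<mu>. 1 \<le> mi_order \<mu>}" for i
      using abs_summable by (simp add: abs_mult abs_monom_val)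
    moreover have "monom_val \<nu> (\<chi> i. tail (A i) y) = (\<Prod>i\<in>UNIV. tail (A i) y ^ \<nu> i)"
      by (simp add: monom_val_def)
    ultimately show ?thesis
      using has_sum_outer_fibre[of "\<lambda>i m. A i m * monom_val m y"] by (simp only: tail_def)
  qed
  then show "(expansion_term y has_sum (B \<nu> * monom_val \<nu> (\<chi> i. tail (A i) y)))
           {M \<in> expansions. outer_index M = \<nu>}"
    by (rule has_sum_cong[THEN iffD1, rotated]) (simp add: expansion_term_eq)
  have "((\<lambda>M. \<bar>B \<nu>\<bar> * (\<Prod>i\<in>UNIV. prod_list (map (\<lambda>m. \<bar>A i m\<bar> * mono_abs m y) (M i)))) has_sum
           (\<bar>B \<nu>\<bar> * mono_abs \<nu> (majorant y))) {M \<in> expansions. outer_index M = \<nu>}"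
  proof -
    have "(\<lambda>m. \<bar>\<bar>A i m\<bar> * mono_abs m y\<bar>) summable_on {\<mu>. 1 \<le> mi_order \<mu>}" for i
      using abs_summable by (simp add: abs_mult mono_abs_nonneg)
    then show ?thesis
      using has_sum_outer_fibre[of "\<lambda>i m. \<bar>A i m\<bar> * mono_abs m y"]
      by (simp only: mono_abs_majorant abs_tail_def)
  qed
  then show "((\<lambda>M. \<bar>expansion_term y M\<bar>) has_sum (\<bar>B \<nu>\<bar> * mono_abs \<nu> (majorant y)))
           {M \<in> expansions. outer_index M = \<nu>}"
    by (rule has_sum_cong[THEN iffD1, rotated]) (simp add: abs_expansion_term_eq)
qed

lemma majorant_le: "infnorm y \<le> radius \<Longrightarrow> infnorm (majorant y) \<le> s1"
proof -
  assume y: "infnorm y \<le> radius"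
  have "abs_tail (A i) y \<le> s1" for i
  proof -
    have "abs_tail (A i) y \<le> infnorm y / t1 * t2"
      using y radius_le by (intro abs_tail_le_scaled[OF inner pos(1)]) simp
    also have "\<dots> \<le> (s1 * t1 / t2) / t1 * t2"
      using y radius_le pos by (intro mult_right_mono divide_right_mono) auto
    finally show ?thesis using pos by simp
  qed
  then show ?thesis
    unfolding majorant_def infnorm_le_iff_cart by (simp add: abs_tail_nonneg)
qed

lemma abs_expansion_terms_summable:
  assumes "infnorm y \<le> radius"
  shows "(\<lambda>M. \<bar>expansion_term y M\<bar>) summable_on expansions"
proof (rule summable_on_ungroup_fibres_nonneg[where p=outer_index and K=UNIV])
  show "(\<lambda>\<nu>. \<bar>B \<nu>\<bar> * mono_abs \<nu> (majorant y)) summable_on UNIV"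
    using coeffs_of_type_summable[OF outer majorant_le[OF assms]] .
  show "((\<lambda>M. \<bar>expansion_term y M\<bar>) has_sum \<bar>B \<nu>\<bar> * mono_abs \<nu> (majorant y))
          {M \<in> expansions. outer_index M = \<nu>}" for \<nu>
    using assms radius_le by (intro expansion_terms_outer_fibre(2)) simp
qed auto

lemma exponent_nonconst_iff:
  assumes "M \<in> expansions"
  shows "1 \<le> mi_order (exponent M) \<longleftrightarrow> 1 \<le> mi_order (outer_index M)"
proof -
  have order: "mi_order (exponent M) = (\<Sum>i\<in>UNIV. sum_list (map mi_order (M i)))"
    unfolding exponent_def mi_order_def
    by (subst sum.swap) (simp add: mi_order_sum_list [unfolded mi_order_def])
  have "mi_order (outer_index M) \<le> mi_order (exponent M)"
    unfolding order outer_index_def mi_order_def [of "\<lambda>i. length (M i)"]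
    using assms by (intro sum_mono length_le_sum_list_map) (auto simp: expansions_def)
  moreover have "mi_order (exponent M) = 0" if "mi_order (outer_index M) = 0"
    using that unfolding order by (simp add: mi_order_def outer_index_def)
  ultimately show ?thesis by linarith
qed

lemma abs_expansion_terms_nonconst_le:
  assumes "infnorm y \<le> radius"
  shows "(\<Sum>\<^sub>\<infinity>M \<in> {M \<in> expansions. 1 \<le> mi_order (exponent M)}. \<bar>expansion_term y M\<bar>) \<le> s2"
proof -
  let ?J = "{M \<in> expansions. 1 \<le> mi_order (outer_index M)}"
  have "(\<lambda>M. \<bar>expansion_term y M\<bar>) summable_on ?J"
    by (rule summable_on_subset_banach[OF abs_expansion_terms_summable[OF assms]]) auto
  then have "((\<lambda>\<nu>. \<bar>B \<nu>\<bar> * mono_abs \<nu> (majorant y)) has_sum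
      (\<Sum>\<^sub>\<infinity>M\<in>?J. \<bar>expansion_term y M\<bar>)) {\<nu>. 1 \<le> mi_order \<nu>}"
  proof (rule has_sum_group_fibres[OF has_sum_infsum, where p=outer_index])
    fix \<nu> :: "'n \<Rightarrow> nat" assume "\<nu> \<in> {\<nu>. 1 \<le> mi_order \<nu>}"
    then have "{M \<in> ?J. outer_index M = \<nu>} = {M \<in> expansions. outer_index M = \<nu>}"
      by auto
    then show "((\<lambda>M. \<bar>expansion_term y M\<bar>) has_sum \<bar>B \<nu>\<bar> * mono_abs \<nu> (majorant y))
        {M \<in> ?J. outer_index M = \<nu>}"
      using expansion_terms_outer_fibre(2) assms radius_le by simp
  qed simp
  then have "(\<Sum>\<^sub>\<infinity>M\<in>?J. \<bar>expansion_term y M\<bar>) = abs_tail B (majorant y)"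
    unfolding abs_tail_def by (simp add: infsumI)
  moreover have "{M \<in> expansions. 1 \<le> mi_order (exponent M)} = ?J"
    using exponent_nonconst_iff by blast
  ultimately show ?thesis
    using coeffs_of_type_abs_tail_le[OF outer majorant_le[OF assms]] by simp
qed

lemma comp_coeff_monom:
  "comp_coeff \<mu> * monom_val \<mu> y = infsum (expansion_term y) {M \<in> expansions. exponent M = \<mu>}"
proof -
  have "comp_coeff \<mu> * monom_val \<mu> y =
      (\<Sum>\<^sub>\<infinity>M \<in> {M \<in> expansions. exponent M = \<mu>}. expansion_coeff M * monom_val \<mu> y)"
    unfolding comp_coeff_def by (simp add: infsum_cmult_left')
  also have "\<dots> = infsum (expansion_term y) {M \<in> expansions. exponent M = \<mu>}"
    unfolding expansion_term_def by (rule infsum_cong) simp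
  finally show ?thesis .
qed

lemma comp_coeffs_of_type: "coeffs_of_type comp_coeff radius s2"
  unfolding coeffs_of_type_def
proof (intro allI impI conjI)
  fix y :: "real^'d" assume y: "infnorm y \<le> radius"
  define q where "q \<mu> = (\<Sum>\<^sub>\<infinity>M \<in> {M \<in> expansions. exponent M = \<mu>}. \<bar>expansion_term y M\<bar>)" for \<mu>
  note summable = abs_expansion_terms_summable[OF y]
  have fibre_summable: "(\<lambda>M. \<bar>expansion_term y M\<bar>) summable_on {M \<in> expansions. exponent M = \<mu>}" for \<mu>
    by (rule summable_on_subset_banach[OF summable]) auto
  then have fibre: "((\<lambda>M. \<bar>expansion_term y M\<bar>) has_sum q \<mu>) {M \<in> expansions. exponent M = \<mu>}" for \<mu>
    unfolding q_def by (rule has_sum_infsum)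
  have coeff_le: "\<bar>comp_coeff \<mu> * monom_val \<mu> y\<bar> \<le> q \<mu>" for \<mu>
    using norm_infsum_bound[of "expansion_term y"] fibre_summable
    unfolding comp_coeff_monom q_def by simp
  have "(q has_sum infsum (\<lambda>M. \<bar>expansion_term y M\<bar>) expansions) UNIV"
    using fibre by (intro has_sum_group_fibres[OF has_sum_infsum[OF summable], where p=exponent]) auto
  then have q: "q summable_on UNIV"
    using summable_on_def by blast
  show coeffs_summable: "(\<lambda>\<mu>. \<bar>comp_coeff \<mu> * monom_val \<mu> y\<bar>) summable_on UNIV"
    by (rule summable_on_comparison_test[OF q]) (use coeff_le in auto)
  let ?J = "{M \<in> expansions. 1 \<le> mi_order (exponent M)}"
  have J_summable: "(\<lambda>M. \<bar>expansion_term y M\<bar>) summable_on ?J"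
    by (rule summable_on_subset_banach[OF summable]) auto
  have "{M \<in> ?J. exponent M = \<mu>} = {M \<in> expansions. exponent M = \<mu>}" if "1 \<le> mi_order \<mu>" for \<mu>
    using that by auto
  then have "(q has_sum (\<Sum>\<^sub>\<infinity>M\<in>?J. \<bar>expansion_term y M\<bar>)) {\<mu>. 1 \<le> mi_order \<mu>}"
    using fibre by (intro has_sum_group_fibres[OF has_sum_infsum[OF J_summable], where p=exponent]) auto
  then have "infsum q {\<mu>. 1 \<le> mi_order \<mu>} \<le> s2"
    using abs_expansion_terms_nonconst_le[OF y] by (simp add: infsumI)
  moreover have "abs_tail comp_coeff y \<le> infsum q {\<mu>. 1 \<le> mi_order \<mu>}"
    unfolding abs_tail_def
  proof (rule infsum_mono)
    show "(\<lambda>\<mu>. \<bar>comp_coeff \<mu>\<bar> * mono_abs \<mu> y) summable_on {\<mu>. 1 \<le> mi_order \<mu>}"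
      using summable_on_subset_banach[OF coeffs_summable] by (simp add: abs_mult abs_monom_val)
    show "q summable_on {\<mu>. 1 \<le> mi_order \<mu>}"
      using summable_on_subset_banach[OF q] by simp
    show "\<bar>comp_coeff \<mu>\<bar> * mono_abs \<mu> y \<le> q \<mu>" for \<mu>
      using coeff_le[of \<mu>] by (simp add: abs_mult abs_monom_val)
  qed
  ultimately show "abs_tail comp_coeff y \<le> s2"
    by linarith
qed

lemma comp_coeff_has_sum:
  assumes y: "infnorm y \<le> radius"
    and outer_sum: "((\<lambda>\<nu>. B \<nu> * monom_val \<nu> (\<chi> i. tail (A i) y)) has_sum G) UNIV"
  shows "((\<lambda>\<mu>. comp_coeff \<mu> * monom_val \<mu> y) has_sum G) UNIV"
proof -
  have summable: "expansion_term y summable_on expansions"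
    using abs_summable_summable[of "expansion_term y"] abs_expansion_terms_summable[OF y] by simp
  have "(expansion_term y has_sum G) expansions"
    using expansion_terms_outer_fibre(1) y radius_le
    by (intro has_sum_ungroup_fibres[where p=outer_index, OF summable _ _ outer_sum]) auto
  then show ?thesis
    using summable_on_subset_banach[OF summable]
    by (intro has_sum_group_fibres[where p=exponent]) (auto simp: comp_coeff_monom)
qed

lemma abs_tail_inner_lt:
  assumes "infnorm y \<le> t1" "infnorm y < r * t1 / t2"
  shows "\<bar>tail (A i) y\<bar> < r"
proof -
  have "\<bar>tail (A i) y\<bar> \<le> abs_tail (A i) y"
    using inner assms(1) by (intro abs_tail_bound) (auto simp: coeffs_of_type_def)
  also have "\<dots> \<le> infnorm y / t1 * t2"
    using assms(1) by (rule abs_tail_le_scaled[OF inner pos(1)])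
  also have "\<dots> < r"
    using assms(2) pos by (simp add: field_simps)
  finally show ?thesis .
qed

lemma power_series_at_comp:
  fixes f :: "real^'d \<Rightarrow> real^'n" and g :: "real^'n \<Rightarrow> real"
  assumes inner_series: "\<And>i. power_series_at (\<lambda>z. f z $ i) z0 (A i)"
    and outer_series: "power_series_at g (f z0) B"
  shows "power_series_at (g \<circ> f) z0 comp_coeff"
proof -
  obtain rA where rA: "rA > 0"
    "\<And>i z. infnorm (z - z0) < rA \<Longrightarrow> ((\<lambda>\<mu>. A i \<mu> * monom_val \<mu> (z - z0)) has_sum f z $ i) UNIV"
    using power_series_at_common_radius[OF inner_series] by blast
  obtain rB where rB: "rB > 0"
    "\<And>w. infnorm (w - f z0) < rB \<Longrightarrow> ((\<lambda>\<nu>. B \<nu> * monom_val \<nu> (w - f z0)) has_sum g w) UNIV"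
    using outer_series unfolding power_series_at_def by blast
  define r where "r = min rA (min radius (rB * t1 / t2))"
    \<comment> \<open>the last bound keeps \<open>f z - f z\<^sub>0\<close> inside the disc where \<open>g\<close>'s series converges\<close>
  have "r > 0"
    using rA(1) rB(1) radius_pos pos by (simp add: r_def)
  moreover have "((\<lambda>\<mu>. comp_coeff \<mu> * monom_val \<mu> (z - z0)) has_sum (g \<circ> f) z) UNIV"
    if z: "infnorm (z - z0) < r" for z
  proof -
    have z_le: "infnorm (z - z0) \<le> radius" "infnorm (z - z0) \<le> t1"
      using z radius_le by (auto simp: r_def)
    have "f z $ i - f z0 $ i = tail (A i) (z - z0)" for i
      using rA(2)[of z i] rA(2)[of z0 i] rA(1) z
      by (intro has_sum_monom_series_increment) (simp_all add: r_def infnorm_0)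
    then have increment: "(\<chi> i. tail (A i) (z - z0)) = f z - f z0"
      by (simp add: vec_eq_iff)
    have "infnorm (f z - f z0) < rB"
      unfolding increment [symmetric] infnorm_less_iff_cart
      using z z_le by (auto intro!: abs_tail_inner_lt simp: r_def)
    with rB(2)[of "f z"] show ?thesis
      using z_le(1) by (intro comp_coeff_has_sum) (simp_all add: increment)
  qed
  ultimately show ?thesis
    unfolding power_series_at_def by blast
qed

end

lemma coeffs_of_type_comp:
  fixes f :: "real^'d::finite \<Rightarrow> real^'n::finite" and g :: "real^'n \<Rightarrow> real"
  assumes "t1 > 0" "t2 > 0" "s1 > 0"
    and "\<And>i. power_series_at (\<lambda>z. f z $ i) z0 (A i)" "\<And>i. coeffs_of_type (A i) t1 t2"
    and "power_series_at g (f z0) B" "coeffs_of_type B s1 s2"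
  shows "\<exists>c. power_series_at (g \<circ> f) z0 c \<and> coeffs_of_type c (min t1 (s1 * t1 / t2)) s2"
proof -
  interpret power_series_composition A B t1 t2 s1 s2
    using assms by unfold_locales
  show ?thesis
    using power_series_at_comp[OF assms(4,6)] comp_coeffs_of_type unfolding radius_def by blast
qed

theorem mainTheorem7:
  fixes U :: "(real^'d::finite) set" and V :: "real set"
    and f :: "real^'d \<Rightarrow> real^'n::finite" and g :: "real^'n \<Rightarrow> real"
    and \<tau>1 \<tau>2 :: "real^'d \<Rightarrow> real" and \<sigma>1 \<sigma>2 :: "real^'n \<Rightarrow> real"
  assumes "open U" and "open V"
    and "\<forall>z\<in>U. \<forall>i. f z $ i \<in> V"
    and "\<forall>i. of_type U (\<lambda>z. f z $ i) \<tau>1 \<tau>2"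
    and "of_type {y. \<forall>i. y $ i \<in> V} g \<sigma>1 \<sigma>2"
  shows "of_type U (g \<circ> f) (\<lambda>z. min (\<tau>1 z) (\<sigma>1 (f z) * \<tau>1 z / \<tau>2 z)) (\<lambda>z. \<sigma>2 (f z))"
proof (rule of_typeI)
  fix z0 assume z0: "z0 \<in> U"
  have fz0: "f z0 \<in> {y. \<forall>i. y $ i \<in> V}"
    using assms(3) z0 by blast
  note inner = assms(4)[rule_format] and outer = assms(5)
  have "\<forall>i. \<exists>a. power_series_at (\<lambda>z. f z $ i) z0 a"
    using of_type_power_series_at[OF inner z0] by blast
  then obtain A where A: "\<And>i. power_series_at (\<lambda>z. f z $ i) z0 (A i)"
    by metis
  obtain B where B: "power_series_at g (f z0) B"
    using of_type_power_series_at[OF outer fz0] by blast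
  show "\<exists>c. power_series_at (g \<circ> f) z0 c \<and>
      coeffs_of_type c (min (\<tau>1 z0) (\<sigma>1 (f z0) * \<tau>1 z0 / \<tau>2 z0)) (\<sigma>2 (f z0))"
    by (rule coeffs_of_type_comp[OF of_type_pos(1,2)[OF inner z0] of_type_pos(1)[OF outer fz0]
          A of_type_coeffs[OF inner z0 A] B of_type_coeffs[OF outer fz0 B]])
  show "0 < min (\<tau>1 z0) (\<sigma>1 (f z0) * \<tau>1 z0 / \<tau>2 z0) \<and> 0 < \<sigma>2 (f z0)"
    using of_type_pos[OF inner z0] of_type_pos[OF outer fz0] by simp
qed

end
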